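(* Let $(\Omega,\Sigma,\mu)$ be a non-atomic measure space, let $A_1,\dots,A_n\in\Sigma$ be pairwise disjoint with $Y=\operatorname{span}\{\chi_{A_i}:1\le i\le n\}$ an $n$-dimensional subspace of $L_1(\mu)$, and suppose $\mu\big(\Omega\setminus\bigcup_{i=1}^nA_i\big)>0$. Then $Y$ does not have property-$(k-U)$ in $L_1(\mu)$ for any $k\in\mathbb N$.
   Context: For a closed subspace $Y$ of $X$ and $y^*\in Y^*$, $HB(y^* )=\{x^*\in X^*:x^*|_Y=y^*,\ \|x^*\|=\|y^*\|\}$; for a set $A$ and $a\in A$, $\dim A=\dim\operatorname{span}(A-a)$. $Y$ has property-$(k-U)$ in $X$ if $\dim HB(y^* )\le k-1$ for all $y^*\in S_{Y^*}$. *)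

theory Defs
  imports "HOL-Analysis.Analysis"
begin

text \<open>Elements of a dual space are represented as maps
  ('a => real) => real that are linear and bounded on the relevant subspace and
  vanish outside it (bounded functionals automatically respect a.e. equality,
  so this is exactly the dual of the quotient space L_1(mu)).\<close>

definition nonatomic :: "'a measure \<Rightarrow> bool" where
  "nonatomic M \<longleftrightarrow> (\<forall>A\<in>sets M. 0 < emeasure M A \<longrightarrow>
      (\<exists>B\<in>sets M. B \<subseteq> A \<and> 0 < emeasure M B \<and> emeasure M B < emeasure M A))"

definition L1 :: "'a measure \<Rightarrow> ('a \<Rightarrow> real) set" where
  "L1 M = {f. integrable M f}"

definition l1norm :: "'a measure \<Rightarrow> ('a \<Rightarrow> real) \<Rightarrow> real" where
  "l1norm M f = (\<integral>x. \<bar>f x\<bar> \<partial>M)"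

definition dual_elem :: "'a measure \<Rightarrow> ('a \<Rightarrow> real) set \<Rightarrow> (('a \<Rightarrow> real) \<Rightarrow> real) \<Rightarrow> bool" where
  "dual_elem M V \<phi> \<longleftrightarrow>
     (\<forall>f\<in>V. \<forall>g\<in>V. \<phi> (\<lambda>x. f x + g x) = \<phi> f + \<phi> g) \<and>
     (\<forall>c. \<forall>f\<in>V. \<phi> (\<lambda>x. c * f x) = c * \<phi> f) \<and>
     (\<exists>C. \<forall>f\<in>V. \<bar>\<phi> f\<bar> \<le> C * l1norm M f) \<and>
     (\<forall>f. f \<notin> V \<longrightarrow> \<phi> f = 0)"

definition dual_norm :: "'a measure \<Rightarrow> ('a \<Rightarrow> real) set \<Rightarrow> (('a \<Rightarrow> real) \<Rightarrow> real) \<Rightarrow> real" where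
  "dual_norm M V \<phi> = (SUP f\<in>{f\<in>V. l1norm M f \<le> 1}. \<bar>\<phi> f\<bar>)"

definition HB :: "'a measure \<Rightarrow> ('a \<Rightarrow> real) set \<Rightarrow> (('a \<Rightarrow> real) \<Rightarrow> real)
                  \<Rightarrow> (('a \<Rightarrow> real) \<Rightarrow> real) set" where
  "HB M Y y = {x. dual_elem M (L1 M) x \<and> (\<forall>f\<in>Y. x f = y f)
                  \<and> dual_norm M (L1 M) x = dual_norm M Y y}"

text \<open>dim S \<le> m, where dim S = dim span (S - a): some finite family of at most m
  functionals spans S - a (for every/any a in S).\<close>
definition affdim_le :: "(('a \<Rightarrow> real) \<Rightarrow> real) set \<Rightarrow> nat \<Rightarrow> bool" where
  "affdim_le S m \<longleftrightarrow> (\<forall>a\<in>S. \<exists>B. finite B \<and> card B \<le> m \<and>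
      (\<forall>x\<in>S. \<exists>c. \<forall>f. x f - a f = (\<Sum>b\<in>B. c b * b f)))"

definition property_kU :: "'a measure \<Rightarrow> ('a \<Rightarrow> real) set \<Rightarrow> nat \<Rightarrow> bool" where
  "property_kU M Y k \<longleftrightarrow>
     (\<forall>y. dual_elem M Y y \<and> dual_norm M Y y = 1 \<longrightarrow> affdim_le (HB M Y y) (k - 1))"

definition char_span :: "(nat \<Rightarrow> 'a set) \<Rightarrow> nat \<Rightarrow> ('a \<Rightarrow> real) set" where
  "char_span A n = {f. \<exists>c. f = (\<lambda>x. \<Sum>i<n. c i * indicator (A i) x)}"

end

theory Submission
  imports Defs "HOL-Library.Function_Algebras"
begin

text \<open>The functional y f = integral of f over A 0 has norm one on Y, attained at the
  normalised indicator of A 0.  Every f in Y vanishes on the complement C of the A i, so for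
  every measurable E contained in C, integration against the indicator of A 0 plus that of E
  is a norm-one extension of y to L_1.  Non-atomicity yields disjoint sets D_1, ..., D_k of
  positive finite measure in C.  The extension for D_j minus the one for the empty set takes
  the value mu (D_l \<inter> D_j) at the indicator of D_l, so these k differences are linearly
  independent and HB(y) has dimension at least k.\<close>

lemma sum_fun_apply: "(sum g S :: 'b \<Rightarrow> 'c::comm_monoid_add) x = (\<Sum>s\<in>S. g s x)"
  by (induction S rule: infinite_finite_induct) auto

lemma biorthogonal_family_le_card:
  fixes d :: "nat \<Rightarrow> 'b \<Rightarrow> real" and t :: "nat \<Rightarrow> 'b" and B :: "('b \<Rightarrow> real) set"
  assumes "finite B"
    and span: "\<And>j. j < k \<Longrightarrow> \<exists>c. \<forall>f. d j f = (\<Sum>b\<in>B. c b * b f)"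
    and diag: "\<And>j. j < k \<Longrightarrow> d j (t j) \<noteq> 0"
    and off_diag: "\<And>j l. j < k \<Longrightarrow> l < k \<Longrightarrow> j \<noteq> l \<Longrightarrow> d j (t l) = 0"
  shows "k \<le> card B"
proof -
  interpret vs: vector_space "\<lambda>c (\<phi>::'b \<Rightarrow> real) f. c * \<phi> f"
    by unfold_locales (auto simp: fun_eq_iff algebra_simps)
  have inj: "inj_on d {..<k}"
    by (rule inj_onI) (metis diag lessThan_iff off_diag)
  have "d ` {..<k} \<subseteq> vs.span B"
  proof (rule image_subsetI)
    fix j assume "j \<in> {..<k}"
    then obtain c where c: "\<forall>f. d j f = (\<Sum>b\<in>B. c b * b f)" using span by auto
    have "d j = (\<Sum>b\<in>B. (\<lambda>f. c b * b f))"
      by (simp add: fun_eq_iff c sum_fun_apply)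
    also have "\<dots> \<in> vs.span B"
      by (intro vs.span_sum vs.span_scale vs.span_base)
    finally show "d j \<in> vs.span B" .
  qed
  moreover have "vs.independent (d ` {..<k})"
  proof (rule vs.independent_if_scalars_zero)
    fix g \<phi> assume sum0: "(\<Sum>\<psi>\<in>d ` {..<k}. (\<lambda>f. g \<psi> * \<psi> f)) = 0" and "\<phi> \<in> d ` {..<k}"
    then obtain l where l: "l < k" "\<phi> = d l" by auto
    have "0 = (\<Sum>j<k. g (d j) * d j (t l))"
      using fun_cong[OF sum0, of "t l"] by (simp add: sum_fun_apply sum.reindex[OF inj])
    also have "\<dots> = g (d l) * d l (t l)"
      by (rule sum.remove[where x = l, THEN trans]) (use l off_diag in auto)
    finally show "g \<phi> = 0" using diag l by simp
  qed simp
  ultimately have "card (d ` {..<k}) \<le> card B"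
    using vs.independent_span_bound[OF \<open>finite B\<close>] by blast
  then show ?thesis by (simp add: card_image[OF inj])
qed

lemma affdim_le_biorthogonal:
  assumes "affdim_le S m" "a \<in> S" "\<And>j. j < k \<Longrightarrow> x j \<in> S"
    and "\<And>j. j < k \<Longrightarrow> x j (t j) \<noteq> a (t j)"
    and "\<And>j l. j < k \<Longrightarrow> l < k \<Longrightarrow> j \<noteq> l \<Longrightarrow> x j (t l) = a (t l)"
  shows "k \<le> m"
proof -
  obtain B where "finite B" "card B \<le> m"
    and span: "\<forall>y\<in>S. \<exists>c. \<forall>f. y f - a f = (\<Sum>b\<in>B. c b * b f)"
    using assms(1,2) unfolding affdim_le_def by blast
  have "k \<le> card B"
    by (rule biorthogonal_family_le_card[where d = "\<lambda>j f. x j f - a f" and t = t])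
      (use \<open>finite B\<close> span assms(3-5) in auto)
  with \<open>card B \<le> m\<close> show ?thesis by simp
qed

lemma nonatomic_finite_subset:
  assumes "nonatomic M" "C \<in> sets M" "0 < emeasure M C"
  obtains E where "E \<in> sets M" "E \<subseteq> C" "0 < emeasure M E" "emeasure M E < \<infinity>"
proof (cases "emeasure M C < \<infinity>")
  case True
  with assms that show ?thesis by blast
next
  case False
  obtain B where B: "B \<in> sets M" "B \<subseteq> C" "0 < emeasure M B"
    and "emeasure M B < emeasure M C"
    using assms unfolding nonatomic_def by blast
  then have "emeasure M B < \<infinity>"
    using less_le_trans[OF _ top_greatest] by simp
  with B show ?thesis by (rule that)
qed

lemma nonatomic_split:
  assumes "nonatomic M" "R \<in> sets M" "0 < emeasure M R" "emeasure M R < \<infinity>"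
  obtains B where "B \<in> sets M" "B \<subseteq> R" "0 < emeasure M B" "0 < emeasure M (R - B)"
proof -
  obtain B where B: "B \<in> sets M" "B \<subseteq> R" "0 < emeasure M B" "emeasure M B < emeasure M R"
    using assms unfolding nonatomic_def by blast
  then have "emeasure M (R - B) = emeasure M R - emeasure M B"
    using assms(2,4) by (intro emeasure_Diff) auto
  with B that show ?thesis by (simp add: diff_gr0_ennreal)
qed

lemma nonatomic_disjoint_subsets_finite:
  fixes k :: nat
  assumes "nonatomic M" "R \<in> sets M" "0 < emeasure M R" "emeasure M R < \<infinity>"
  shows "\<exists>D. (\<forall>j<k. D j \<in> sets M \<and> D j \<subseteq> R \<and> 0 < measure M (D j))
             \<and> disjoint_family_on D {..<k}"
  using assms(2-4)
proof (induction k arbitrary: R)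
  case 0
  show ?case by (simp add: disjoint_family_on_def)
next
  case (Suc k)
  obtain B where B: "B \<in> sets M" "B \<subseteq> R" "0 < emeasure M B" "0 < emeasure M (R - B)"
    using nonatomic_split[OF assms(1) Suc.prems] .
  have "emeasure M B \<le> emeasure M R" "emeasure M (R - B) \<le> emeasure M R"
    using B Suc.prems(1) by (auto intro: emeasure_mono)
  then have finite: "emeasure M B < \<infinity>" "emeasure M (R - B) < \<infinity>"
    using Suc.prems(3) by auto
  obtain D where D: "\<forall>j<k. D j \<in> sets M \<and> D j \<subseteq> R - B \<and> 0 < measure M (D j)"
    and disj: "disjoint_family_on D {..<k}"
    using Suc.IH[of "R - B"] Suc.prems(1) B finite by blast
  have "0 < measure M B"
    using B finite by (simp add: emeasure_eq_ennreal_measure)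
  then have "\<forall>j<Suc k. (D(k := B)) j \<in> sets M \<and> (D(k := B)) j \<subseteq> R
      \<and> 0 < measure M ((D(k := B)) j)"
    using D B by (auto simp: less_Suc_eq)
  moreover have "disjoint_family_on (D(k := B)) {..<Suc k}"
  proof -
    have "B \<inter> (\<Union>j<k. (D(k := B)) j) = {}"
      using D by auto
    moreover have "disjoint_family_on (D(k := B)) {..<k}"
      using disj by (simp add: disjoint_family_on_def)
    ultimately show ?thesis
      by (simp add: lessThan_Suc disjoint_family_on_insert)
  qed
  ultimately show ?case by blast
qed

lemma nonatomic_disjoint_subsets:
  fixes k :: nat
  assumes "nonatomic M" "C \<in> sets M" "0 < emeasure M C"
  obtains D where "\<And>j. j < k \<Longrightarrow> D j \<in> sets M" "\<And>j. j < k \<Longrightarrow> D j \<subseteq> C"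
    "\<And>j. j < k \<Longrightarrow> 0 < measure M (D j)" "disjoint_family_on D {..<k}"
proof -
  obtain R where R: "R \<in> sets M" "R \<subseteq> C" "0 < emeasure M R" "emeasure M R < \<infinity>"
    using nonatomic_finite_subset[OF assms] .
  then obtain D where "\<forall>j<k. D j \<in> sets M \<and> D j \<subseteq> R \<and> 0 < measure M (D j)"
    and "disjoint_family_on D {..<k}"
    using nonatomic_disjoint_subsets_finite[OF assms(1)] by blast
  with R(2) show ?thesis by (intro that) auto
qed

definition l1_subspace :: "'a measure \<Rightarrow> ('a \<Rightarrow> real) set \<Rightarrow> bool" where
  "l1_subspace M V \<longleftrightarrow> V \<subseteq> L1 M \<and> (\<forall>f\<in>V. \<forall>g\<in>V. (\<lambda>x. f x + g x) \<in> V) \<and>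
     (\<forall>c. \<forall>f\<in>V. (\<lambda>x. c * f x) \<in> V)"

definition integral_functional ::
    "'a measure \<Rightarrow> ('a \<Rightarrow> real) set \<Rightarrow> ('a \<Rightarrow> real) \<Rightarrow> ('a \<Rightarrow> real) \<Rightarrow> real" where
  "integral_functional M V h f = (if f \<in> V then \<integral>x. f x * h x \<partial>M else 0)"

lemma l1_subspace_L1: "l1_subspace M (L1 M)"
  unfolding l1_subspace_def L1_def by auto

lemma integrable_mult_bounded:
  fixes f h :: "'a \<Rightarrow> real"
  assumes "integrable M f" "h \<in> borel_measurable M" "\<And>x. \<bar>h x\<bar> \<le> 1"
  shows "integrable M (\<lambda>x. f x * h x)"
proof (rule Bochner_Integration.integrable_bound[OF assms(1)])
  show "(\<lambda>x. f x * h x) \<in> borel_measurable M"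
    using assms(1,2) by measurable
  show "AE x in M. norm (f x * h x) \<le> norm (f x)"
    using assms(3) by (auto simp: abs_mult mult_left_le)
qed

lemma abs_integral_mult_le_l1norm:
  fixes f h :: "'a \<Rightarrow> real"
  assumes "integrable M f" "h \<in> borel_measurable M" "\<And>x. \<bar>h x\<bar> \<le> 1"
  shows "\<bar>\<integral>x. f x * h x \<partial>M\<bar> \<le> l1norm M f"
proof -
  have "\<bar>\<integral>x. f x * h x \<partial>M\<bar> \<le> (\<integral>x. \<bar>f x * h x\<bar> \<partial>M)"
    using integral_norm_bound[of M "\<lambda>x. f x * h x"] by simp
  also have "\<dots> \<le> (\<integral>x. \<bar>f x\<bar> \<partial>M)"
  proof (rule integral_mono)
    show "integrable M (\<lambda>x. \<bar>f x * h x\<bar>)"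
      using integrable_mult_bounded[OF assms] by (rule integrable_abs)
    show "integrable M (\<lambda>x. \<bar>f x\<bar>)"
      using assms(1) by (rule integrable_abs)
    show "\<bar>f x * h x\<bar> \<le> \<bar>f x\<bar>" for x
      using assms(3)[of x] by (simp add: abs_mult mult_left_le)
  qed
  finally show ?thesis unfolding l1norm_def .
qed

lemma dual_elem_integral_functional:
  assumes V: "l1_subspace M V" and h: "h \<in> borel_measurable M" "\<And>x. \<bar>h x\<bar> \<le> 1"
  shows "dual_elem M V (integral_functional M V h)"
proof -
  have int: "integrable M f" "integrable M (\<lambda>x. f x * h x)" if "f \<in> V" for f
    using V that h by (auto simp: l1_subspace_def L1_def intro: integrable_mult_bounded)
  show ?thesis
    unfolding dual_elem_def
  proof (intro conjI ballI allI impI exI[of _ 1])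
    fix f g assume "f \<in> V" "g \<in> V"
    then show "integral_functional M V h (\<lambda>x. f x + g x) =
        integral_functional M V h f + integral_functional M V h g"
      using V int by (simp add: integral_functional_def l1_subspace_def distrib_right)
  next
    fix c f assume "f \<in> V"
    then show "integral_functional M V h (\<lambda>x. c * f x) = c * integral_functional M V h f"
      using V by (simp add: integral_functional_def l1_subspace_def mult.assoc)
  next
    fix f assume "f \<in> V"
    then show "\<bar>integral_functional M V h f\<bar> \<le> 1 * l1norm M f"
      using int h by (simp add: integral_functional_def abs_integral_mult_le_l1norm)
  qed (simp add: integral_functional_def)
qed

lemma dual_norm_eq_1I:
  assumes "f0 \<in> V" "l1norm M f0 \<le> 1" "\<bar>\<phi> f0\<bar> = 1" "\<And>f. f \<in> V \<Longrightarrow> \<bar>\<phi> f\<bar> \<le> l1norm M f"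
  shows "dual_norm M V \<phi> = 1"
  unfolding dual_norm_def
proof (rule antisym)
  show "(SUP f\<in>{f \<in> V. l1norm M f \<le> 1}. \<bar>\<phi> f\<bar>) \<le> 1"
    by (rule cSUP_least) (use assms in force)+
  have "bdd_above ((\<lambda>f. \<bar>\<phi> f\<bar>) ` {f \<in> V. l1norm M f \<le> 1})"
    by (rule bdd_aboveI[of _ 1]) (use assms in force)
  then have "\<bar>\<phi> f0\<bar> \<le> (SUP f\<in>{f \<in> V. l1norm M f \<le> 1}. \<bar>\<phi> f\<bar>)"
    by (rule cSUP_upper[rotated]) (use assms in auto)
  then show "1 \<le> (SUP f\<in>{f \<in> V. l1norm M f \<le> 1}. \<bar>\<phi> f\<bar>)"
    using assms by simp
qed

lemma dual_norm_integral_functional: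
  assumes V: "l1_subspace M V" and h: "h \<in> borel_measurable M" "\<And>x. \<bar>h x\<bar> \<le> 1"
    and f0: "f0 \<in> V" "l1norm M f0 \<le> 1" "(\<integral>x. f0 x * h x \<partial>M) = 1"
  shows "dual_norm M V (integral_functional M V h) = 1"
proof (rule dual_norm_eq_1I[OF f0(1,2)])
  show "\<bar>integral_functional M V h f0\<bar> = 1"
    using f0 by (simp add: integral_functional_def)
  fix f assume "f \<in> V"
  then show "\<bar>integral_functional M V h f\<bar> \<le> l1norm M f"
    using V h by (simp add: integral_functional_def abs_integral_mult_le_l1norm l1_subspace_def
        L1_def subset_iff)
qed

lemma integral_functional_in_HB:
  assumes Y: "l1_subspace M Y" and h: "h \<in> borel_measurable M" "\<And>x. \<bar>h x\<bar> \<le> 1"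
    and f0: "f0 \<in> Y" "l1norm M f0 \<le> 1" "(\<integral>x. f0 x * h x \<partial>M) = 1"
    and E: "E \<in> sets M" "\<And>x. x \<in> E \<Longrightarrow> h x = 0" "\<And>f x. f \<in> Y \<Longrightarrow> x \<in> E \<Longrightarrow> f x = 0"
  shows "integral_functional M (L1 M) (\<lambda>x. h x + indicator E x)
           \<in> HB M Y (integral_functional M Y h)"
proof -
  let ?h = "\<lambda>x. h x + indicator E x"
  have h': "?h \<in> borel_measurable M" "\<And>x. \<bar>?h x\<bar> \<le> 1"
    using h E(1,2) by (auto simp: indicator_def)
  have agree: "(\<lambda>x. f x * ?h x) = (\<lambda>x. f x * h x)" if "f \<in> Y" for f
    using E(3)[OF that] by (auto simp: fun_eq_iff indicator_def)
  have "Y \<subseteq> L1 M"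
    using Y by (simp add: l1_subspace_def)
  then have "\<forall>f\<in>Y. integral_functional M (L1 M) ?h f = integral_functional M Y h f"
    using agree by (auto simp: integral_functional_def)
  moreover have "dual_norm M (L1 M) (integral_functional M (L1 M) ?h) = 1"
    using f0 \<open>Y \<subseteq> L1 M\<close> agree
    by (intro dual_norm_integral_functional[OF l1_subspace_L1 h']) auto
  ultimately show ?thesis
    unfolding HB_def using dual_elem_integral_functional[OF l1_subspace_L1 h']
      dual_norm_integral_functional[OF Y h f0] by simp
qed

lemma card_le_affdim_HB:
  fixes k :: nat
  assumes Y: "l1_subspace M Y" and h: "h \<in> borel_measurable M" "\<And>x. \<bar>h x\<bar> \<le> 1"
    and f0: "f0 \<in> Y" "l1norm M f0 \<le> 1" "(\<integral>x. f0 x * h x \<partial>M) = 1"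
    and D: "\<And>j. j < k \<Longrightarrow> D j \<in> sets M" "\<And>j. j < k \<Longrightarrow> 0 < measure M (D j)"
      "\<And>j x. j < k \<Longrightarrow> x \<in> D j \<Longrightarrow> h x = 0"
      "\<And>j f x. j < k \<Longrightarrow> f \<in> Y \<Longrightarrow> x \<in> D j \<Longrightarrow> f x = 0"
    and disj: "disjoint_family_on D {..<k}"
    and aff: "affdim_le (HB M Y (integral_functional M Y h)) m"
  shows "k \<le> m"
proof -
  define X where "X E = integral_functional M (L1 M) (\<lambda>x. h x + indicator E x)" for E
  have X_empty: "X {} \<in> HB M Y (integral_functional M Y h)"
    unfolding X_def by (rule integral_functional_in_HB[OF Y h f0]) auto
  have X_D: "X (D j) \<in> HB M Y (integral_functional M Y h)" if "j < k" for j
    unfolding X_def using D that by (intro integral_functional_in_HB[OF Y h f0]) auto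
  have X_indicator: "X E (indicator (D l)) = measure M (D l \<inter> E)" if "l < k" for E l
  proof -
    have "emeasure M (D l) < \<infinity>"
      using D(2)[OF that] by (auto simp: less_top[symmetric] measure_zero_top)
    then have "indicator (D l) \<in> L1 M"
      using D(1)[OF that] by (simp add: L1_def)
    moreover have "indicator (D l) x * (h x + indicator E x) = indicator (D l \<inter> E) x" for x
      using D(3)[OF that] by (auto simp: indicator_def)
    moreover have "D l \<inter> E \<inter> space M = D l \<inter> E"
      using sets.sets_into_space[OF D(1)[OF that]] by blast
    ultimately show ?thesis
      by (simp add: X_def integral_functional_def)
  qed
  show ?thesis
  proof (rule affdim_le_biorthogonal[OF aff X_empty X_D, where t = "\<lambda>l. indicator (D l)"])
    show "X (D j) (indicator (D j)) \<noteq> X {} (indicator (D j))" if "j < k" for j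
      using X_indicator[OF that] D(2)[OF that] by simp
    show "X (D j) (indicator (D l)) = X {} (indicator (D l))" if "j < k" "l < k" "j \<noteq> l" for j l
      using X_indicator[OF that(2)] disj that by (simp add: disjoint_family_on_def Int_commute)
  qed
qed

lemma l1_subspace_char_span:
  assumes "\<forall>i<n. A i \<in> sets M" "\<forall>i<n. emeasure M (A i) < \<infinity>"
  shows "l1_subspace M (char_span A n)"
  unfolding l1_subspace_def
proof (intro conjI ballI allI subsetI)
  fix f assume "f \<in> char_span A n"
  then obtain c where f: "f = (\<lambda>x. \<Sum>i<n. c i * indicator (A i) x)"
    unfolding char_span_def by blast
  have "integrable M (\<lambda>x. \<Sum>i<n. c i * indicator (A i) x)"
    using assms by (intro Bochner_Integration.integrable_sum integrable_mult_right) auto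
  then show "f \<in> L1 M"
    unfolding L1_def f by simp
next
  fix f g assume "f \<in> char_span A n" "g \<in> char_span A n"
  then obtain c d where "f = (\<lambda>x. \<Sum>i<n. c i * indicator (A i) x)"
    and "g = (\<lambda>x. \<Sum>i<n. d i * indicator (A i) x)"
    unfolding char_span_def by blast
  then have "(\<lambda>x. f x + g x) = (\<lambda>x. \<Sum>i<n. (c i + d i) * indicator (A i) x)"
    by (simp add: distrib_right sum.distrib)
  then show "(\<lambda>x. f x + g x) \<in> char_span A n"
    unfolding char_span_def mem_Collect_eq by (rule exI[of _ "\<lambda>i. c i + d i"])
next
  fix a f assume "f \<in> char_span A n"
  then obtain c where f: "f = (\<lambda>x. \<Sum>i<n. c i * indicator (A i) x)"
    unfolding char_span_def by blast
  have "(\<lambda>x. a * f x) = (\<lambda>x. \<Sum>i<n. (a * c i) * indicator (A i) x)"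
    unfolding f by (simp only: sum_distrib_left mult.assoc)
  then show "(\<lambda>x. a * f x) \<in> char_span A n"
    unfolding char_span_def mem_Collect_eq by (rule exI[of _ "\<lambda>i. a * c i"])
qed

lemma char_span_vanishes: "f \<in> char_span A n \<Longrightarrow> x \<notin> (\<Union>i<n. A i) \<Longrightarrow> f x = 0"
  unfolding char_span_def by (auto intro!: sum.neutral)

lemma scaled_indicator_in_char_span: "i < n \<Longrightarrow> (\<lambda>x. c * indicator (A i) x) \<in> char_span A n"
  unfolding char_span_def
  by (intro CollectI exI[of _ "\<lambda>j. if j = i then c else 0"]) (simp add: fun_eq_iff)

lemma normalized_indicator:
  assumes "A \<in> sets M" "0 < measure M A"
  shows "l1norm M (\<lambda>x. (1 / measure M A) * indicator A x) = 1"
    and "(\<integral>x. (1 / measure M A) * indicator A x * indicator A x \<partial>M) = 1"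
  using assms sets.sets_into_space[OF assms(1)]
  by (simp_all add: l1norm_def abs_mult Int_absorb2 mult.assoc mult_indicator_subset)

theorem theorem4p6:
  fixes M :: "'a measure" and A :: "nat \<Rightarrow> 'a set" and n :: nat
  assumes "nonatomic M"
    and "n \<ge> 1"
    and "\<forall>i<n. A i \<in> sets M"
    and "disjoint_family_on A {..<n}"
    and "\<forall>i<n. 0 < emeasure M (A i) \<and> emeasure M (A i) < \<infinity>"
    and "0 < emeasure M (space M - (\<Union>i<n. A i))"
  shows "\<forall>k::nat. k \<ge> 1 \<longrightarrow> \<not> property_kU M (char_span A n) k"
proof (intro allI impI notI)
  fix k :: nat
  assume "k \<ge> 1" and kU: "property_kU M (char_span A n) k"
  let ?Y = "char_span A n" and ?h = "indicator (A 0) :: 'a \<Rightarrow> real"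
  let ?f0 = "\<lambda>x. (1 / measure M (A 0)) * indicator (A 0) x"
  have A0: "A 0 \<in> sets M" "0 < measure M (A 0)"
    using assms(2,3,5) by (auto simp: emeasure_eq_ennreal_measure)
  have Y: "l1_subspace M ?Y"
    using assms(3,5) by (intro l1_subspace_char_span) auto
  have h: "?h \<in> borel_measurable M" "\<And>x. \<bar>?h x\<bar> \<le> 1"
    using A0(1) by auto
  have "?f0 \<in> ?Y"
    using assms(2) by (intro scaled_indicator_in_char_span) simp
  then have f0: "?f0 \<in> ?Y" "l1norm M ?f0 \<le> 1" "(\<integral>x. ?f0 x * ?h x \<partial>M) = 1"
    using normalized_indicator[OF A0] by simp_all
  have aff: "affdim_le (HB M ?Y (integral_functional M ?Y ?h)) (k - 1)"
    using kU dual_elem_integral_functional[OF Y h] dual_norm_integral_functional[OF Y h f0]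
    unfolding property_kU_def by blast
  obtain D where D: "\<And>j. j < k \<Longrightarrow> D j \<in> sets M"
    "\<And>j. j < k \<Longrightarrow> D j \<subseteq> space M - (\<Union>i<n. A i)"
    "\<And>j. j < k \<Longrightarrow> 0 < measure M (D j)" "disjoint_family_on D {..<k}"
    using nonatomic_disjoint_subsets[OF assms(1) _ assms(6)] assms(3) by blast
  have "k \<le> k - 1"
  proof (rule card_le_affdim_HB[OF Y h f0 D(1,3) _ _ D(4) aff])
    show "?h x = 0" if "j < k" "x \<in> D j" for j x
      using that D(2)[OF that(1)] assms(2) by auto
    show "f x = 0" if "j < k" "f \<in> ?Y" "x \<in> D j" for j f x
      using that D(2)[OF that(1)] by (intro char_span_vanishes) auto
  qed
  with \<open>k \<ge> 1\<close> show False by simp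
qed

end
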